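(* Let $i\in\{1,2,3,4\}$ and let $M\in\mathcal{X}_i$. Then either $M$ has a minor isomorphic to some matroid in $\mathcal{N}_i$, or $M\in\mathcal{X}_{i+1}$.
   Context: A partial field is a pair $(R,G)$, $R$ a commutative ring with unity, $G$ a subgroup of its units containing $-1$; a matroid is representable over it if it is isomorphic to $M[A]$ for a matrix $A$ with entries in $G\cup\{0\}$ whose non-zero square subdeterminants all lie in $G$ (for an $X\times Y$ matrix $A$, $M[A]$ is the matroid on $X\cup Y$ with bases $X\triangle Z$ where $|X\cap Z|=|Y\cap Z|$ and $\det A[X\cap Z,Y\cap Z]\neq0$). The Hydra partial fields are: $\mathbb{H}_1=\mathrm{GF}(5)$; $\mathbb{H}_2=(\mathbb{Z}[i,1/2],\langle i,1-i\rangle)$ with $i^2=-1$; $\mathbb{H}_3=(\mathbb{Q}(\alpha),\langle -1,\alpha,1-\alpha,\alpha^2-\alpha+1\rangle)$; $\mathbb{H}_4=(\mathbb{Q}(\alpha,\beta),\langle -1,\alpha,\beta,\alpha-1,\beta-1,\alpha\beta-1,\alpha+\beta-2\alpha\beta\rangle)$; $\mathbb{H}_5=(\mathbb{Q}(\alpha,\beta,\gamma),\langle -1,\alpha,\beta,\gamma,\alpha-1,\beta-1,\gamma-1,\alpha-\gamma,\gamma-\alpha\beta,(1-\gamma)-(1-\alpha)\beta\rangle)$, with $\alpha,\beta,\gamma$ indeterminates and $\langle\cdot\rangle$ denoting the generated multiplicative group. For $i\in\{1,\dots,5\}$, $\mathcal{X}_i$ is the set of excluded minors (matroids not $\mathbb{H}_i$-representable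 all of whose proper minors are) for the class of $\mathbb{H}_i$-representable matroids. For $i\in\{1,2,3,4\}$, $\mathcal{N}_i$ is the set of matroids in $\mathcal{X}_{i+1}$ that are $\mathbb{H}_i$-representable. *)

theory Defs
  imports Complex_Main "Jordan_Normal_Form.Determinant" "HOL-Library.Numeral_Type"
    "HOL-Computational_Algebra.Polynomial" "HOL-Computational_Algebra.Fraction_Field"
begin

text \<open>A matroid on a finite ground set, given by its set of bases.\<close>
type_synonym 'a matroid = "'a set \<times> 'a set set"

definition is_matroid :: "'a matroid \<Rightarrow> bool" where
  "is_matroid M \<longleftrightarrow> (let E = fst M; \<B> = snd M in
     finite E \<and> \<B> \<noteq> {} \<and> (\<forall>B\<in>\<B>. B \<subseteq> E) \<and>
     (\<forall>B1\<in>\<B>. \<forall>B2\<in>\<B>. \<forall>x\<in>B1 - B2. \<exists>y\<in>B2 - B1. insert y (B1 - {x}) \<in> \<B>))"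

definition indep :: "'a matroid \<Rightarrow> 'a set \<Rightarrow> bool" where
  "indep M I \<longleftrightarrow> (\<exists>B\<in>snd M. I \<subseteq> B)"

definition rk :: "'a matroid \<Rightarrow> 'a set \<Rightarrow> nat" where
  "rk M X = Max (card ` {I. I \<subseteq> X \<and> indep M I})"

text \<open>N is the minor M / C \ D, for disjoint C, D contained in the ground set.\<close>
definition minor_of :: "'a matroid \<Rightarrow> 'a matroid \<Rightarrow> bool" where
  "minor_of N M \<longleftrightarrow> (\<exists>C D. C \<subseteq> fst M \<and> D \<subseteq> fst M \<and> C \<inter> D = {} \<and>
     fst N = fst M - (C \<union> D) \<and>
     snd N = {X. X \<subseteq> fst N \<and> rk M (X \<union> C) = card X + rk M C \<and>
                 rk M (X \<union> C) = rk M (fst M - D)})"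

definition proper_minor_of :: "'a matroid \<Rightarrow> 'a matroid \<Rightarrow> bool" where
  "proper_minor_of N M \<longleftrightarrow> minor_of N M \<and> fst N \<noteq> fst M"

definition matroid_iso :: "'a matroid \<Rightarrow> 'b matroid \<Rightarrow> bool" where
  "matroid_iso M N \<longleftrightarrow> (\<exists>f. bij_betw f (fst M) (fst N) \<and> snd N = (image f) ` snd M)"

definition subdet :: "(nat \<Rightarrow> nat \<Rightarrow> 'r::comm_ring_1) \<Rightarrow> nat set \<Rightarrow> nat set \<Rightarrow> 'r" where
  "subdet A Rs Cs = det (mat (card Rs) (card Rs)
      (\<lambda>(i,j). A (sorted_list_of_set Rs ! i) (sorted_list_of_set Cs ! j)))"

text \<open>M[A] for an m x n matrix A: ground set X \<union> Y with X = Inl ` {..<m}, Y = Inr ` {..<n};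
  bases X \<triangle> Z where Z = Inl ` Rs \<union> Inr ` Cs, card Rs = card Cs and det A[Rs,Cs] \<noteq> 0.\<close>
definition matM :: "nat \<Rightarrow> nat \<Rightarrow> (nat \<Rightarrow> nat \<Rightarrow> 'r::comm_ring_1) \<Rightarrow> (nat + nat) matroid" where
  "matM m n A = (Inl ` {..<m} \<union> Inr ` {..<n},
     {Inl ` ({..<m} - Rs) \<union> Inr ` Cs | Rs Cs. Rs \<subseteq> {..<m} \<and> Cs \<subseteq> {..<n} \<and>
        card Rs = card Cs \<and> subdet A Rs Cs \<noteq> 0})"

text \<open>Representability over the partial field (R, G), R the ring type 'r.\<close>
definition pf_representable :: "'r::comm_ring_1 set \<Rightarrow> 'a matroid \<Rightarrow> bool" where
  "pf_representable G M \<longleftrightarrow> (\<exists>m n (A :: nat \<Rightarrow> nat \<Rightarrow> 'r).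
     (\<forall>i<m. \<forall>j<n. A i j \<in> G \<union> {0}) \<and>
     (\<forall>Rs Cs. Rs \<subseteq> {..<m} \<and> Cs \<subseteq> {..<n} \<and> card Rs = card Cs \<and> subdet A Rs Cs \<noteq> 0
         \<longrightarrow> subdet A Rs Cs \<in> G) \<and>
     matroid_iso M (matM m n A))"

inductive_set gen_grp :: "'r::field set \<Rightarrow> 'r set" for S where
  one: "1 \<in> gen_grp S"
| gen: "s \<in> S \<Longrightarrow> s \<in> gen_grp S"
| mult: "a \<in> gen_grp S \<Longrightarrow> b \<in> gen_grp S \<Longrightarrow> a * b \<in> gen_grp S"
| inv: "a \<in> gen_grp S \<Longrightarrow> inverse a \<in> gen_grp S"

definition a3 :: "rat poly fract" where "a3 = Fract [:0, 1:] 1"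
definition a4 :: "rat poly poly fract" where "a4 = Fract [:[:0, 1:]:] 1"
definition b4 :: "rat poly poly fract" where "b4 = Fract [:0, 1:] 1"
definition a5 :: "rat poly poly poly fract" where "a5 = Fract [:[:[:0, 1:]:]:] 1"
definition b5 :: "rat poly poly poly fract" where "b5 = Fract [:[:0, 1:]:] 1"
definition c5 :: "rat poly poly poly fract" where "c5 = Fract [:0, 1:] 1"

definition H1 :: "5 set" where "H1 = {x. x \<noteq> 0}"
definition H2 :: "complex set" where "H2 = gen_grp {\<i>, 1 - \<i>}"
definition H3 :: "rat poly fract set" where
  "H3 = gen_grp {-1, a3, 1 - a3, a3^2 - a3 + 1}"
definition H4 :: "rat poly poly fract set" where
  "H4 = gen_grp {-1, a4, b4, a4 - 1, b4 - 1, a4 * b4 - 1, a4 + b4 - 2 * a4 * b4}"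
definition H5 :: "rat poly poly poly fract set" where
  "H5 = gen_grp {-1, a5, b5, c5, a5 - 1, b5 - 1, c5 - 1, a5 - c5, c5 - a5 * b5,
                 (1 - c5) - (1 - a5) * b5}"

definition hydra_rep :: "nat \<Rightarrow> 'a matroid \<Rightarrow> bool" where
  "hydra_rep i M = (if i = 1 then pf_representable H1 M
     else if i = 2 then pf_representable H2 M
     else if i = 3 then pf_representable H3 M
     else if i = 4 then pf_representable H4 M
     else pf_representable H5 M)"

text \<open>M \<in> \<X>_i: excluded minor for the class of H_i-representable matroids.\<close>
definition excluded_minor_hydra :: "nat \<Rightarrow> 'a matroid \<Rightarrow> bool" where
  "excluded_minor_hydra i M \<longleftrightarrow> is_matroid M \<and> \<not> hydra_rep i M \<and>
     (\<forall>N. proper_minor_of N M \<longrightarrow> hydra_rep i N)"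

definition in_N :: "nat \<Rightarrow> 'a matroid \<Rightarrow> bool" where
  "in_N i N \<longleftrightarrow> excluded_minor_hydra (Suc i) N \<and> hydra_rep i N"

end

theory Submission
  imports Defs "Jordan_Normal_Form.Char_Poly"
begin

text \<open>Substitutions into polynomial rings give partial-field homomorphisms
  \<open>\<bbbH>\<^sub>5 \<rightarrow> \<bbbH>\<^sub>4\<close> (\<open>\<alpha>, \<beta>, \<gamma> \<mapsto> 1/\<alpha>, \<beta>, \<beta>\<close>), \<open>\<bbbH>\<^sub>4 \<rightarrow> \<bbbH>\<^sub>3\<close> (\<open>\<alpha>, \<beta> \<mapsto> \<alpha>, \<alpha>/(\<alpha> - 1)\<close>),
  \<open>\<bbbH>\<^sub>3 \<rightarrow> \<bbbH>\<^sub>2\<close> (\<open>\<alpha> \<mapsto> \<i>\<close>) and \<open>\<bbbH>\<^sub>2 \<rightarrow> GF(5)\<close> (\<open>\<i> \<mapsto> 2\<close>). They preserve all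
  subdeterminants, so \<open>\<bbbH>\<^sub>i\<^sub>+\<^sub>1\<close>-representable matroids are \<open>\<bbbH>\<^sub>i\<close>-representable. Hence an
  excluded minor \<open>M\<close> for \<open>\<bbbH>\<^sub>i\<close> is not \<open>\<bbbH>\<^sub>i\<^sub>+\<^sub>1\<close>-representable. Either all its proper
  minors are, and \<open>M\<close> is an excluded minor for \<open>\<bbbH>\<^sub>i\<^sub>+\<^sub>1\<close>; or a minor-minimal
  non-\<open>\<bbbH>\<^sub>i\<^sub>+\<^sub>1\<close>-representable proper minor exists, which is an excluded minor for
  \<open>\<bbbH>\<^sub>i\<^sub>+\<^sub>1\<close> and, as a proper minor of \<open>M\<close>, \<open>\<bbbH>\<^sub>i\<close>-representable.\<close>

section \<open>Rank and bases of matroids\<close>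

lemma indep_mono: "indep M I \<Longrightarrow> J \<subseteq> I \<Longrightarrow> indep M J"
  unfolding indep_def by blast

lemma rk_eqI:
  assumes "\<exists>I\<subseteq>X. indep M I \<and> card I = n" and "\<And>I. I \<subseteq> X \<Longrightarrow> indep M I \<Longrightarrow> card I \<le> n"
  shows "rk M X = n"
  unfolding rk_def
proof (rule Max_eqI)
  have "card ` {I. I \<subseteq> X \<and> indep M I} \<subseteq> {..n}" using assms(2) by auto
  then show "finite (card ` {I. I \<subseteq> X \<and> indep M I})" by (rule finite_subset) simp
qed (use assms in auto)

definition is_basis_of :: "'a matroid \<Rightarrow> 'a set \<Rightarrow> 'a set \<Rightarrow> bool" where
  "is_basis_of M X I \<longleftrightarrow> I \<subseteq> X \<and> indep M I \<and> (\<forall>e\<in>X - I. \<not> indep M (insert e I))"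

locale matroid =
  fixes M :: "'a matroid"
  assumes matroid: "is_matroid M"
begin

lemma finite_ground: "finite (fst M)"
  and bases_nonempty: "snd M \<noteq> {}"
  and base_subset_ground: "B \<in> snd M \<Longrightarrow> B \<subseteq> fst M"
  and base_exchange: "\<lbrakk>B1 \<in> snd M; B2 \<in> snd M; x \<in> B1 - B2\<rbrakk> \<Longrightarrow>
     \<exists>y\<in>B2 - B1. insert y (B1 - {x}) \<in> snd M"
  using matroid unfolding is_matroid_def Let_def by blast+

lemma finite_base: "B \<in> snd M \<Longrightarrow> finite B"
  using base_subset_ground finite_ground finite_subset by blast

lemma indep_subset_ground: "indep M I \<Longrightarrow> I \<subseteq> fst M"
  unfolding indep_def using base_subset_ground by blast

lemma finite_indep: "indep M I \<Longrightarrow> finite I"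
  using indep_subset_ground finite_ground finite_subset by blast

lemma indep_empty: "indep M {}"
  unfolding indep_def using bases_nonempty by blast

lemma card_base_eq:
  assumes "B1 \<in> snd M" and B2: "B2 \<in> snd M"
  shows "card B1 = card B2"
  using assms(1)
proof (induction "card (B1 - B2)" arbitrary: B1)
  case 0
  then have "B1 \<subseteq> B2" using finite_base by auto
  moreover have "B2 \<subseteq> B1"
    using base_exchange[OF B2 0(2)] \<open>B1 \<subseteq> B2\<close> by blast
  ultimately show ?case by simp
next
  case (Suc n)
  then obtain x where x: "x \<in> B1 - B2"
    by (metis card.empty ex_in_conv nat.distinct(1))
  from base_exchange[OF Suc.prems B2 x] obtain y
    where y: "y \<in> B2 - B1" and B1': "insert y (B1 - {x}) \<in> snd M" by blast
  have "insert y (B1 - {x}) - B2 = (B1 - B2) - {x}" using y by auto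
  then have "card (insert y (B1 - {x}) - B2) = n"
    using Suc.hyps(2) x finite_base[OF Suc.prems] by simp
  with Suc.hyps(1) B1' have "card (insert y (B1 - {x})) = card B2" by blast
  moreover have "card (insert y (B1 - {x})) = card B1"
    using card.remove[OF finite_base[OF Suc.prems], of x] x y finite_base[OF Suc.prems] by simp
  ultimately show ?case by simp
qed

text \<open>A base containing \<open>I\<close> with fewest elements outside \<open>I \<union> B'\<close> lies inside
  \<open>I \<union> B'\<close>: exchanging such an element against one of \<open>B'\<close> would give a better base.\<close>
lemma ex_base_between:
  assumes "indep M I" and B': "B' \<in> snd M"
  shows "\<exists>B\<in>snd M. I \<subseteq> B \<and> B \<subseteq> I \<union> B'"
proof -
  let ?excess = "\<lambda>B. card (B - (I \<union> B'))"
  obtain B0 where "B0 \<in> snd M" "I \<subseteq> B0" using assms(1) unfolding indep_def by blast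
  then obtain B where B: "B \<in> snd M" "I \<subseteq> B"
    and least: "\<And>B''. B'' \<in> snd M \<and> I \<subseteq> B'' \<Longrightarrow> ?excess B \<le> ?excess B''"
    using ex_has_least_nat[of "\<lambda>B. B \<in> snd M \<and> I \<subseteq> B" B0 ?excess] by blast
  have "B \<subseteq> I \<union> B'"
  proof
    fix x assume "x \<in> B"
    show "x \<in> I \<union> B'"
    proof (rule ccontr)
      assume x: "x \<notin> I \<union> B'"
      from base_exchange[OF B(1) B', of x] x \<open>x \<in> B\<close> obtain y
        where y: "y \<in> B' - B" and B'': "insert y (B - {x}) \<in> snd M" by blast
      have "insert y (B - {x}) - (I \<union> B') = (B - (I \<union> B')) - {x}" using y by auto
      moreover have "card ((B - (I \<union> B')) - {x}) < ?excess B"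
        using x \<open>x \<in> B\<close> finite_base[OF B(1)] by (intro card_Diff1_less) auto
      moreover have "I \<subseteq> insert y (B - {x})" using B(2) x by auto
      ultimately show False using least[of "insert y (B - {x})"] B'' by simp
    qed
  qed
  then show ?thesis using B by blast
qed

lemma augment:
  assumes I: "indep M I" and J: "indep M J" and less: "card I < card J"
  shows "\<exists>x\<in>J - I. indep M (insert x I)"
proof (rule ccontr)
  assume no_aug: "\<not> ?thesis"
  obtain B' where B': "B' \<in> snd M" "J \<subseteq> B'" using J unfolding indep_def by blast
  obtain B where B: "B \<in> snd M" "I \<subseteq> B" "B \<subseteq> I \<union> B'"
    using ex_base_between[OF I B'(1)] by blast
  have "(J - I) \<inter> B = {}"
    using no_aug B(1,2) unfolding indep_def by blast
  then have "J - I \<subseteq> B' - B" and "B - B' \<subseteq> I - J" using B(3) B'(2) by auto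
  then have "card (J - I) \<le> card (B' - B)" and "card (B - B') \<le> card (I - J)"
    using finite_base[OF B(1)] finite_base[OF B'(1)] finite_indep[OF I] by (auto intro: card_mono)
  moreover have "card (B' - B) = card (B - B')"
    using card_base_eq[OF B(1) B'(1)] finite_base[OF B(1)] finite_base[OF B'(1)]
    by (metis card_Int_Diff Int_commute add_left_cancel)
  moreover have "card (I - J) < card (J - I)"
    using less finite_indep[OF I] finite_indep[OF J]
    by (metis card_Int_Diff Int_commute add_less_cancel_left)
  ultimately show False by simp
qed

lemma finite_card_indep_subsets: "finite (card ` {I. I \<subseteq> X \<and> indep M I})"
proof -
  have "card ` {I. I \<subseteq> X \<and> indep M I} \<subseteq> card ` Pow (fst M)"
    using indep_subset_ground by auto
  then show ?thesis using finite_ground finite_subset by blast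
qed

lemma card_le_rk: "I \<subseteq> X \<Longrightarrow> indep M I \<Longrightarrow> card I \<le> rk M X"
  unfolding rk_def by (rule Max_ge[OF finite_card_indep_subsets]) blast

lemma ex_indep_card_rk: "\<exists>I\<subseteq>X. indep M I \<and> card I = rk M X"
proof -
  have "rk M X \<in> card ` {I. I \<subseteq> X \<and> indep M I}"
    unfolding rk_def using indep_empty by (intro Max_in finite_card_indep_subsets) auto
  then show ?thesis by auto
qed

lemma is_basis_of_iff_card:
  "is_basis_of M X I \<longleftrightarrow> I \<subseteq> X \<and> indep M I \<and> card I = rk M X"
proof
  assume basis: "is_basis_of M X I"
  then have I: "I \<subseteq> X" "indep M I" unfolding is_basis_of_def by auto
  obtain J where J: "J \<subseteq> X" "indep M J" "card J = rk M X" using ex_indep_card_rk by blast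
  have "\<not> card I < card J"
    using augment[OF I(2) J(2)] J(1) basis unfolding is_basis_of_def by blast
  with card_le_rk[OF I] J(3) show "I \<subseteq> X \<and> indep M I \<and> card I = rk M X" using I by simp
next
  assume I: "I \<subseteq> X \<and> indep M I \<and> card I = rk M X"
  have "\<not> indep M (insert e I)" if e: "e \<in> X - I" for e
  proof
    assume "indep M (insert e I)"
    then have "card (insert e I) \<le> rk M X" using card_le_rk I e by blast
    then show False using I e finite_indep by simp
  qed
  then show "is_basis_of M X I" unfolding is_basis_of_def using I by blast
qed

lemma ex_basis_of_superset:
  assumes "indep M I" and "I \<subseteq> X"
  shows "\<exists>K. I \<subseteq> K \<and> is_basis_of M X K"
proof -
  let ?P = "\<lambda>K. I \<subseteq> K \<and> K \<subseteq> X \<and> indep M K"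
  have bounded: "\<forall>K. ?P K \<longrightarrow> card K < Suc (card (fst M))"
    using card_mono[OF finite_ground indep_subset_ground] by (simp add: less_Suc_eq_le)
  have "?P I" using assms by blast
  from Lattices_Big.ex_has_greatest_nat[OF this bounded]
  obtain K where K: "?P K" and greatest: "\<forall>K'. ?P K' \<longrightarrow> card K' \<le> card K"
    by blast
  have "\<not> indep M (insert e K)" if e: "e \<in> X - K" for e
  proof
    assume "indep M (insert e K)"
    then have "card (insert e K) \<le> card K" using greatest K e by blast
    then show False using K e finite_indep by simp
  qed
  then show ?thesis using K unfolding is_basis_of_def by blast
qed

lemma ex_basis_of: "\<exists>I. is_basis_of M X I"
  using ex_basis_of_superset[of "{}" X] indep_empty by blast

lemma rk_mono: "X \<subseteq> Y \<Longrightarrow> rk M X \<le> rk M Y"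
  using ex_indep_card_rk[of X] card_le_rk[of _ Y] by (metis order.trans)

lemma rk_indep:
  assumes "indep M I"
  shows "rk M I = card I"
proof -
  have "is_basis_of M I I" using assms unfolding is_basis_of_def by simp
  then show ?thesis by (simp add: is_basis_of_iff_card)
qed

lemma rk_Un_basis_of:
  assumes I: "is_basis_of M C I"
  shows "rk M (Y \<union> C) = rk M (Y \<union> I)"
proof -
  obtain K where K: "I \<subseteq> K" "is_basis_of M (Y \<union> I) K"
    using ex_basis_of_superset[of I "Y \<union> I"] I unfolding is_basis_of_def by blast
  have "\<not> indep M (insert e K)" if "e \<in> C - I" for e
    using I K(1) that indep_mono[of M "insert e K" "insert e I"] unfolding is_basis_of_def by blast
  then have "is_basis_of M (Y \<union> C) K"
    using K I unfolding is_basis_of_def by blast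
  then show ?thesis using K(2) by (simp add: is_basis_of_iff_card)
qed

lemma basis_of_exchange:
  assumes K1: "is_basis_of M X K1" and K2: "is_basis_of M X K2" and x: "x \<in> K1 - K2"
  shows "\<exists>y\<in>K2 - K1. is_basis_of M X (insert y (K1 - {x}))"
proof -
  have K1': "K1 \<subseteq> X" "indep M K1" "card K1 = rk M X"
    and K2': "K2 \<subseteq> X" "indep M K2" "card K2 = rk M X"
    using K1 K2 unfolding is_basis_of_iff_card by blast+
  have fin: "finite K1" using K1'(2) finite_indep by blast
  have "card (K1 - {x}) < card K2" using card_Diff1_less[OF fin, of x] x K1'(3) K2'(3) by simp
  from augment[OF indep_mono[OF K1'(2)] K2'(2) this] obtain y
    where y: "y \<in> K2 - (K1 - {x})" "indep M (insert y (K1 - {x}))" by blast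
  have y': "y \<in> K2 - K1" using y x by blast
  have "card (insert y (K1 - {x})) = card K1"
    using y' x fin card.remove[OF fin, of x] by simp
  then have "is_basis_of M X (insert y (K1 - {x}))"
    unfolding is_basis_of_iff_card using y' y(2) K1'(1,3) K2'(1) by auto
  with y' show ?thesis by blast
qed

end

section \<open>Minors\<close>

definition contract_delete :: "'a matroid \<Rightarrow> 'a set \<Rightarrow> 'a set \<Rightarrow> 'a matroid" where
  "contract_delete M C D = (fst M - (C \<union> D),
     {X. X \<subseteq> fst M - (C \<union> D) \<and> rk M (X \<union> C) = card X + rk M C \<and>
         rk M (X \<union> C) = rk M (fst M - D)})"

lemma minor_of_iff_contract_delete:
  "minor_of N M \<longleftrightarrow>
     (\<exists>C D. C \<subseteq> fst M \<and> D \<subseteq> fst M \<and> C \<inter> D = {} \<and> N = contract_delete M C D)"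
  unfolding minor_of_def contract_delete_def by (simp add: prod_eq_iff cong: conj_cong)

context matroid
begin

context
  fixes C D :: "'a set"
  assumes C: "C \<subseteq> fst M" and D: "D \<subseteq> fst M" and CD: "C \<inter> D = {}"
begin

lemma base_contract_delete_iff:
  assumes I: "is_basis_of M C I" and X: "X \<subseteq> fst M - (C \<union> D)"
  shows "X \<in> snd (contract_delete M C D) \<longleftrightarrow> is_basis_of M (fst M - D) (X \<union> I)"
proof -
  have I': "I \<subseteq> C" "indep M I" "card I = rk M C" using I by (auto simp: is_basis_of_iff_card)
  have fin_X: "finite X" using X finite_ground finite_subset by blast
  have card_XI: "card (X \<union> I) = card X + rk M C"
    using X I' fin_X finite_indep by (subst card_Un_disjoint) auto
  have "X \<union> I \<subseteq> fst M - D" using X I' C CD by auto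
  moreover have "indep M (X \<union> I) \<longleftrightarrow> rk M (X \<union> I) = card (X \<union> I)"
  proof
    assume "rk M (X \<union> I) = card (X \<union> I)"
    then obtain J where "J \<subseteq> X \<union> I" "indep M J" "card J = card (X \<union> I)"
      using ex_indep_card_rk[of "X \<union> I"] by auto
    then show "indep M (X \<union> I)"
      using card_subset_eq[of "X \<union> I" J] fin_X I' finite_indep by auto
  qed (rule rk_indep)
  ultimately show ?thesis
    unfolding contract_delete_def is_basis_of_iff_card rk_Un_basis_of[OF I] card_XI
    using X by auto
qed

lemma indep_contract_delete_iff:
  assumes I: "is_basis_of M C I"
  shows "indep (contract_delete M C D) J \<longleftrightarrow> J \<subseteq> fst M - (C \<union> D) \<and> indep M (J \<union> I)"
proof
  assume "indep (contract_delete M C D) J"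
  then obtain X where X: "X \<in> snd (contract_delete M C D)" "J \<subseteq> X"
    unfolding indep_def by blast
  moreover have "X \<subseteq> fst M - (C \<union> D)" using X(1) unfolding contract_delete_def by auto
  ultimately show "J \<subseteq> fst M - (C \<union> D) \<and> indep M (J \<union> I)"
    using base_contract_delete_iff[OF I] indep_mono[of M "X \<union> I" "J \<union> I"]
    unfolding is_basis_of_def by blast
next
  assume J: "J \<subseteq> fst M - (C \<union> D) \<and> indep M (J \<union> I)"
  have "I \<subseteq> C" using I unfolding is_basis_of_def by blast
  then obtain K where K: "J \<union> I \<subseteq> K" "is_basis_of M (fst M - D) K"
    using ex_basis_of_superset[of "J \<union> I" "fst M - D"] J C CD by blast
  have "K \<inter> C \<subseteq> I"
    using K I indep_mono[of M K "insert _ I"] unfolding is_basis_of_def by blast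
  then have "K - I \<subseteq> fst M - (C \<union> D)" and "K - I \<union> I = K"
    using K unfolding is_basis_of_def by auto
  then have "K - I \<in> snd (contract_delete M C D)"
    using base_contract_delete_iff[OF I] K(2) by simp
  moreover have "J \<subseteq> K - I" using J K(1) \<open>I \<subseteq> C\<close> by auto
  ultimately show "indep (contract_delete M C D) J" unfolding indep_def by blast
qed

lemma is_matroid_contract_delete: "is_matroid (contract_delete M C D)"
proof -
  obtain I where I: "is_basis_of M C I" using ex_basis_of by blast
  show ?thesis
    unfolding is_matroid_def Let_def
  proof (intro conjI ballI)
    show "finite (fst (contract_delete M C D))"
      using finite_ground unfolding contract_delete_def by simp
    have "indep (contract_delete M C D) {}"
      using I indep_contract_delete_iff[OF I] unfolding is_basis_of_def by simp
    then show "snd (contract_delete M C D) \<noteq> {}" unfolding indep_def by blast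
  next
    fix B assume "B \<in> snd (contract_delete M C D)"
    then show "B \<subseteq> fst (contract_delete M C D)" unfolding contract_delete_def by auto
  next
    fix B1 B2 x
    assume B1: "B1 \<in> snd (contract_delete M C D)" and B2: "B2 \<in> snd (contract_delete M C D)"
      and x: "x \<in> B1 - B2"
    have sub: "B1 \<subseteq> fst M - (C \<union> D)" "B2 \<subseteq> fst M - (C \<union> D)"
      using B1 B2 unfolding contract_delete_def by auto
    have "I \<subseteq> C" using I unfolding is_basis_of_def by blast
    then have xI: "x \<in> (B1 \<union> I) - (B2 \<union> I)" using x sub by auto
    have "is_basis_of M (fst M - D) (B1 \<union> I)" "is_basis_of M (fst M - D) (B2 \<union> I)"
      using B1 B2 base_contract_delete_iff[OF I sub(1)] base_contract_delete_iff[OF I sub(2)] by blast+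
    from basis_of_exchange[OF this xI] obtain y
      where y: "y \<in> B2 - B1" and basis: "is_basis_of M (fst M - D) (insert y (B1 \<union> I - {x}))"
      by blast
    have "insert y (B1 \<union> I - {x}) = insert y (B1 - {x}) \<union> I" using xI by auto
    moreover have sub': "insert y (B1 - {x}) \<subseteq> fst M - (C \<union> D)" using sub y by auto
    ultimately have "insert y (B1 - {x}) \<in> snd (contract_delete M C D)"
      using base_contract_delete_iff[OF I sub'] basis by simp
    with y show "\<exists>y\<in>B2 - B1. insert y (B1 - {x}) \<in> snd (contract_delete M C D)" by blast
  qed
qed

lemma rk_contract_delete:
  assumes Y: "Y \<subseteq> fst M - (C \<union> D)"
  shows "rk (contract_delete M C D) Y = rk M (Y \<union> C) - rk M C"
proof -
  obtain I where I: "is_basis_of M C I" using ex_basis_of by blast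
  show ?thesis
  proof (rule rk_eqI)
    have I': "I \<subseteq> C" "indep M I" "card I = rk M C" using I unfolding is_basis_of_iff_card by blast+
    obtain K where K: "I \<subseteq> K" "is_basis_of M (Y \<union> I) K"
      using ex_basis_of_superset[of I "Y \<union> I"] I' by blast
    have K': "K \<subseteq> Y \<union> I" "indep M K" "card K = rk M (Y \<union> C)"
      using K(2) rk_Un_basis_of[OF I, of Y] unfolding is_basis_of_iff_card by auto
    have "K - I \<subseteq> Y" and KI: "K - I \<union> I = K" using K(1) K'(1) by auto
    moreover have "card (K - I) = rk M (Y \<union> C) - rk M C"
      using K(1) K'(3) I'(2,3) finite_indep by (simp add: card_Diff_subset)
    moreover have "indep (contract_delete M C D) (K - I)"
      using Y \<open>K - I \<subseteq> Y\<close> K'(2) KI indep_contract_delete_iff[OF I] by auto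
    ultimately show "\<exists>J\<subseteq>Y. indep (contract_delete M C D) J \<and> card J = rk M (Y \<union> C) - rk M C"
      by blast
  next
    fix J assume J: "J \<subseteq> Y" "indep (contract_delete M C D) J"
    have I': "I \<subseteq> C" "card I = rk M C" using I unfolding is_basis_of_iff_card by blast+
    have JI: "indep M (J \<union> I)" using J(2) indep_contract_delete_iff[OF I] by blast
    then have "card (J \<union> I) \<le> rk M (Y \<union> C)"
      using card_le_rk[of "J \<union> I" "Y \<union> I"] J(1) rk_Un_basis_of[OF I, of Y] by auto
    moreover have "card (J \<union> I) = card J + card I"
      using J(1) Y I'(1) JI finite_indep by (subst card_Un_disjoint) auto
    ultimately show "card J \<le> rk M (Y \<union> C) - rk M C" using I'(2) by simp
  qed
qed

end

lemma contract_delete_contract_delete: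
  assumes C: "C \<subseteq> fst M" and D: "D \<subseteq> fst M" and CD: "C \<inter> D = {}"
    and C': "C' \<subseteq> fst M - (C \<union> D)" and D': "D' \<subseteq> fst M - (C \<union> D)" and C'D': "C' \<inter> D' = {}"
  shows "contract_delete (contract_delete M C D) C' D' = contract_delete M (C \<union> C') (D \<union> D')"
proof -
  let ?N = "contract_delete M C D"
  have ground: "fst ?N = fst M - (C \<union> D)" unfolding contract_delete_def by simp
  have rk_N: "rk ?N Y = rk M (Y \<union> C) - rk M C" if "Y \<subseteq> fst M - (C \<union> D)" for Y
    using rk_contract_delete[OF C D CD that] .
  have "X \<in> snd (contract_delete ?N C' D') \<longleftrightarrow> X \<in> snd (contract_delete M (C \<union> C') (D \<union> D'))"
    if X: "X \<subseteq> fst M - (C \<union> C' \<union> (D \<union> D'))" for X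
  proof -
    have "C \<subseteq> fst M - (D \<union> D')" using C CD D' by auto
    then have "rk M C \<le> rk M (C \<union> C')" "rk M (C \<union> C') \<le> rk M (X \<union> (C \<union> C'))"
      "rk M C \<le> rk M (fst M - (D \<union> D'))"
      by (simp_all add: rk_mono)
    moreover have "rk ?N (X \<union> C') = rk M (X \<union> (C \<union> C')) - rk M C"
      using rk_N[of "X \<union> C'"] X C' by (auto simp: Un_ac)
    moreover have "rk ?N C' = rk M (C \<union> C') - rk M C"
      using rk_N[OF C'] by (simp add: Un_ac)
    moreover have "rk ?N (fst ?N - D') = rk M (fst M - (D \<union> D')) - rk M C"
    proof -
      have "fst ?N - D' \<union> C = fst M - (D \<union> D')" using ground C CD C' D' by auto
      then show ?thesis using rk_N[of "fst ?N - D'"] ground by auto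
    qed
    moreover have "fst ?N - (C' \<union> D') = fst M - (C \<union> C' \<union> (D \<union> D'))" using ground by auto
    ultimately show ?thesis unfolding contract_delete_def[of ?N] using X
      by (auto simp: contract_delete_def[of M "C \<union> C'"])
  qed
  moreover have "fst (contract_delete ?N C' D') = fst (contract_delete M (C \<union> C') (D \<union> D'))"
    unfolding contract_delete_def by auto
  ultimately show ?thesis
    unfolding contract_delete_def[of ?N] contract_delete_def[of M "C \<union> C'"] prod_eq_iff
    by auto
qed

end

lemma minor_of_is_matroid:
  assumes "is_matroid M" and "minor_of N M"
  shows "is_matroid N"
proof -
  interpret matroid M by (rule matroid.intro) fact
  show ?thesis
    using assms(2) is_matroid_contract_delete unfolding minor_of_iff_contract_delete by blast
qed

lemma minor_of_trans:
  assumes "is_matroid M" and "minor_of N M" and "minor_of L N"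
  shows "minor_of L M"
proof -
  interpret matroid M by (rule matroid.intro) fact
  obtain C D where CD: "C \<subseteq> fst M" "D \<subseteq> fst M" "C \<inter> D = {}" and N: "N = contract_delete M C D"
    using assms(2) unfolding minor_of_iff_contract_delete by blast
  have ground: "fst N = fst M - (C \<union> D)" unfolding N contract_delete_def by simp
  obtain C' D' where C'D': "C' \<subseteq> fst N" "D' \<subseteq> fst N" "C' \<inter> D' = {}"
    and L: "L = contract_delete N C' D'"
    using assms(3) unfolding minor_of_iff_contract_delete by blast
  have "L = contract_delete M (C \<union> C') (D \<union> D')"
    using contract_delete_contract_delete[OF CD] C'D' unfolding L N ground[unfolded N] by blast
  moreover have "C \<union> C' \<subseteq> fst M" "D \<union> D' \<subseteq> fst M" "(C \<union> C') \<inter> (D \<union> D') = {}"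
    using CD C'D' ground by auto
  ultimately show ?thesis unfolding minor_of_iff_contract_delete by blast
qed

lemma minor_of_ground_subset: "minor_of N M \<Longrightarrow> fst N \<subseteq> fst M"
  unfolding minor_of_def by auto

lemma ex_minor_minimal_proper_minor:
  assumes M: "is_matroid M" and "proper_minor_of N M" and "\<not> P N"
  shows "\<exists>N'. proper_minor_of N' M \<and> \<not> P N' \<and> (\<forall>N''. proper_minor_of N'' N' \<longrightarrow> P N'')"
proof -
  let ?Q = "\<lambda>N. proper_minor_of N M \<and> \<not> P N"
  obtain N' where N': "?Q N'" and least: "\<forall>N''. ?Q N'' \<longrightarrow> card (fst N') \<le> card (fst N'')"
    using ex_has_least_nat[of ?Q N "\<lambda>N. card (fst N)"] assms(2,3) by blast
  have "P N''" if N'': "proper_minor_of N'' N'" for N''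
  proof -
    have "finite (fst M)" using matroid.finite_ground[OF matroid.intro, OF M] .
    moreover have "fst N'' \<subset> fst N'" "fst N' \<subseteq> fst M"
      using N'' N' minor_of_ground_subset unfolding proper_minor_of_def by blast+
    ultimately have "card (fst N'') < card (fst N')" "card (fst N') \<le> card (fst M)"
      by (auto intro: psubset_card_mono card_mono finite_subset)
    moreover have "minor_of N'' M"
      using minor_of_trans[OF M] N' N'' unfolding proper_minor_of_def by blast
    ultimately show "P N''" using least unfolding proper_minor_of_def by fastforce
  qed
  with N' show ?thesis by blast
qed

lemma matroid_iso_refl: "matroid_iso M M"
  unfolding matroid_iso_def by (intro exI[of _ id]) simp

section \<open>Homomorphisms of partial fields\<close>

definition unit_subgroup :: "'a::comm_ring_1 set \<Rightarrow> bool" where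
  "unit_subgroup G \<longleftrightarrow> 1 \<in> G \<and> (\<forall>a\<in>G. \<forall>b\<in>G. a * b \<in> G) \<and> (\<forall>a\<in>G. \<exists>b\<in>G. a * b = 1)"

lemma zero_notin_unit_subgroup: "unit_subgroup G \<Longrightarrow> 0 \<notin> G"
  unfolding unit_subgroup_def by auto

lemma gen_grp_nonzero:
  assumes "0 \<notin> T"
  shows "(x::'a::field) \<in> gen_grp T \<Longrightarrow> x \<noteq> 0"
  by (induction rule: gen_grp.induct) (use assms in auto)

lemma gen_grp_divide: "x \<in> gen_grp T \<Longrightarrow> y \<in> gen_grp T \<Longrightarrow> (x::'a::field) / y \<in> gen_grp T"
  unfolding divide_inverse by (intro gen_grp.mult gen_grp.inv)

lemma unit_subgroup_gen_grp:
  fixes T :: "'a::field set"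
  assumes "0 \<notin> T"
  shows "unit_subgroup (gen_grp T)"
  unfolding unit_subgroup_def
  using gen_grp.intros gen_grp_nonzero[OF assms] by (metis right_inverse)

locale subring_hom =
  fixes S :: "'a::comm_ring_1 set" and f :: "'a \<Rightarrow> 'b::comm_ring_1"
  assumes one_mem: "1 \<in> S"
    and uminus_mem: "x \<in> S \<Longrightarrow> - x \<in> S"
    and add_mem: "x \<in> S \<Longrightarrow> y \<in> S \<Longrightarrow> x + y \<in> S"
    and mult_mem: "x \<in> S \<Longrightarrow> y \<in> S \<Longrightarrow> x * y \<in> S"
    and hom_one: "f 1 = 1"
    and hom_add: "x \<in> S \<Longrightarrow> y \<in> S \<Longrightarrow> f (x + y) = f x + f y"
    and hom_mult: "x \<in> S \<Longrightarrow> y \<in> S \<Longrightarrow> f (x * y) = f x * f y"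
begin

lemma zero_mem: "0 \<in> S"
  using add_mem[OF one_mem uminus_mem[OF one_mem]] by simp

lemma hom_zero: "f 0 = 0"
  using hom_add[OF zero_mem zero_mem] by simp

lemma hom_uminus: "x \<in> S \<Longrightarrow> f (- x) = - f x"
  using hom_add[OF uminus_mem, of x x] hom_zero by (simp add: eq_neg_iff_add_eq_0 add.commute)

lemma sum_mem: "(\<And>a. a \<in> A \<Longrightarrow> g a \<in> S) \<Longrightarrow> sum g A \<in> S"
  by (induction A rule: infinite_finite_induct) (auto intro: zero_mem add_mem)

lemma hom_sum: "(\<And>a. a \<in> A \<Longrightarrow> g a \<in> S) \<Longrightarrow> f (sum g A) = (\<Sum>a\<in>A. f (g a))"
  by (induction A rule: infinite_finite_induct) (auto simp: hom_zero hom_add sum_mem)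

lemma prod_mem: "(\<And>a. a \<in> A \<Longrightarrow> g a \<in> S) \<Longrightarrow> prod g A \<in> S"
  by (induction A rule: infinite_finite_induct) (auto intro: one_mem mult_mem)

lemma hom_prod: "(\<And>a. a \<in> A \<Longrightarrow> g a \<in> S) \<Longrightarrow> f (prod g A) = (\<Prod>a\<in>A. f (g a))"
  by (induction A rule: infinite_finite_induct) (auto simp: hom_one hom_mult prod_mem)

lemma of_int_sign_mem: "of_int (sign p) \<in> S"
  and hom_of_int_sign: "f (of_int (sign p)) = of_int (sign p)"
  by (cases p rule: sign_cases; simp add: one_mem uminus_mem hom_one hom_uminus)+

context
  fixes A :: "'a mat" and n :: nat
  assumes A: "A \<in> carrier_mat n n" and entries: "\<And>i j. i < n \<Longrightarrow> j < n \<Longrightarrow> A $$ (i, j) \<in> S"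
begin

private lemma permutation_term_mem:
  assumes "p permutes {0..<n}"
  shows "(\<Prod>i = 0..<n. A $$ (i, p i)) \<in> S"
    and "f (\<Prod>i = 0..<n. A $$ (i, p i)) = (\<Prod>i = 0..<n. map_mat f A $$ (i, p i))"
proof -
  have "A $$ (i, p i) \<in> S" if "i \<in> {0..<n}" for i
    using entries permutes_in_image[OF assms] that by simp
  then show "(\<Prod>i = 0..<n. A $$ (i, p i)) \<in> S"
    and "f (\<Prod>i = 0..<n. A $$ (i, p i)) = (\<Prod>i = 0..<n. map_mat f A $$ (i, p i))"
    using hom_prod[of "{0..<n}" "\<lambda>i. A $$ (i, p i)"] permutes_in_image[OF assms] A
    by (auto intro!: prod_mem prod.cong)
qed

lemma hom_det: "f (det A) = det (map_mat f A)"
proof -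
  have fA: "map_mat f A \<in> carrier_mat n n" using A by simp
  have "f (det A) = (\<Sum>p | p permutes {0..<n}. f (of_int (sign p) * (\<Prod>i = 0..<n. A $$ (i, p i))))"
    unfolding det_def'[OF A]
    by (rule hom_sum) (simp add: mult_mem of_int_sign_mem permutation_term_mem)
  also have "\<dots> = det (map_mat f A)"
    unfolding det_def'[OF fA]
    by (rule sum.cong) (simp_all add: hom_mult of_int_sign_mem permutation_term_mem hom_of_int_sign)
  finally show ?thesis .
qed

end

lemma hom_subdet:
  assumes Rs: "Rs \<subseteq> {..<m}" and Cs: "Cs \<subseteq> {..<n}" and card: "card Rs = card Cs"
    and entries: "\<And>i j. i < m \<Longrightarrow> j < n \<Longrightarrow> B i j \<in> S"
  shows "subdet (\<lambda>i j. f (B i j)) Rs Cs = f (subdet B Rs Cs)"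
proof -
  let ?rs = "sorted_list_of_set Rs" and ?cs = "sorted_list_of_set Cs"
  let ?B = "mat (card Rs) (card Rs) (\<lambda>(i, j). B (?rs ! i) (?cs ! j))"
  have "finite Rs" "finite Cs" using Rs Cs by (auto intro: finite_subset)
  then have "?rs ! i \<in> Rs \<and> ?cs ! j \<in> Cs" if "i < card Rs" "j < card Rs" for i j
    using nth_mem[of i ?rs] nth_mem[of j ?cs] that card by simp
  then have "?rs ! i < m \<and> ?cs ! j < n" if "i < card Rs" "j < card Rs" for i j
    using that Rs Cs by blast
  then have entries_B: "?B $$ (i, j) \<in> S" if "i < card Rs" "j < card Rs" for i j
    using that entries by simp
  have "map_mat f ?B = mat (card Rs) (card Rs) (\<lambda>(i, j). f (B (?rs ! i) (?cs ! j)))"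
    by (rule eq_matI) auto
  then show ?thesis
    unfolding subdet_def using hom_det[of ?B "card Rs", OF _ entries_B] by simp
qed

theorem pf_representable_transfer:
  assumes G: "G \<subseteq> S" "f ` G \<subseteq> G'" "0 \<notin> G'" and "pf_representable G M"
  shows "pf_representable G' M"
proof -
  obtain m n and A :: "nat \<Rightarrow> nat \<Rightarrow> 'a"
    where entries: "\<forall>i<m. \<forall>j<n. A i j \<in> G \<union> {0}"
      and subdets: "\<forall>Rs Cs. Rs \<subseteq> {..<m} \<and> Cs \<subseteq> {..<n} \<and> card Rs = card Cs \<and>
         subdet A Rs Cs \<noteq> 0 \<longrightarrow> subdet A Rs Cs \<in> G"
      and iso: "matroid_iso M (matM m n A)"
    using assms(4) unfolding pf_representable_def by (elim exE conjE) blast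
  define A' where "A' i j = f (A i j)" for i j
  have f_G: "f x \<in> G'" if "x \<in> G" for x using G(2) that by blast
  have A_S: "A i j \<in> S" if "i < m" "j < n" for i j
  proof -
    have "A i j \<in> G \<union> {0}" using entries that by blast
    then show ?thesis using G(1) zero_mem by auto
  qed
  have subdet_A': "subdet A' Rs Cs = f (subdet A Rs Cs)"
    if "Rs \<subseteq> {..<m}" "Cs \<subseteq> {..<n}" "card Rs = card Cs" for Rs Cs
    unfolding A'_def using hom_subdet[OF that A_S] .
  have zero_iff: "subdet A' Rs Cs = 0 \<longleftrightarrow> subdet A Rs Cs = 0"
    if "Rs \<subseteq> {..<m}" "Cs \<subseteq> {..<n}" "card Rs = card Cs" for Rs Cs
    using subdet_A'[OF that] subdets that f_G[of "subdet A Rs Cs"] G(3) hom_zero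
    by (cases "subdet A Rs Cs = 0") auto
  then have "matM m n A' = matM m n A"
    unfolding matM_def by (simp cong: conj_cong)
  moreover have "A' i j \<in> G' \<union> {0}" if "i < m" "j < n" for i j
  proof -
    have "A i j \<in> G \<union> {0}" using entries that by blast
    then show ?thesis unfolding A'_def using f_G hom_zero by auto
  qed
  moreover have "subdet A' Rs Cs \<in> G'"
    if "Rs \<subseteq> {..<m}" "Cs \<subseteq> {..<n}" "card Rs = card Cs" "subdet A' Rs Cs \<noteq> 0" for Rs Cs
    using that subdets zero_iff[of Rs Cs] subdet_A'[of Rs Cs] f_G by auto
  ultimately show ?thesis
    unfolding pf_representable_def using iso by (intro exI[of _ m] exI[of _ n] exI[of _ A']) simp
qed

end

lemma eval_poly_pCons [simp]: "h 0 = 0 \<Longrightarrow> eval_poly h (pCons c p) x = h c + x * eval_poly h p x"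
  by (simp add: eval_poly_def Polynomial.map_poly_pCons)

lemma comm_ring_hom_eval_poly:
  assumes "comm_ring_hom h"
  shows "comm_ring_hom (\<lambda>p. eval_poly h p x)"
proof -
  interpret map_poly_comm_ring_hom h by (rule map_poly_comm_ring_hom.intro) fact
  show ?thesis by unfold_locales (simp_all add: eval_poly_def hom_distribs)
qed

interpretation to_fract_hom: comm_ring_hom to_fract
  by unfold_locales simp_all

text \<open>A ring homomorphism \<open>ev\<close> on \<open>R\<close> need not factor through \<open>emb : R \<rightarrow> K\<close>, but if
  \<open>ker emb \<subseteq> ker ev\<close> it extends to the subring of fractions \<open>emb p / emb q\<close> with \<open>ev q\<close> a
  unit. All homomorphisms between consecutive Hydra partial fields arise this way from
  substitutions into polynomial rings.\<close>
locale localization =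
  emb: comm_ring_hom emb + ev: comm_ring_hom ev
  for emb :: "'r::comm_ring_1 \<Rightarrow> 'k::field" and ev :: "'r \<Rightarrow> 'l::comm_ring_1" +
  assumes ev_kernel: "emb p = 0 \<Longrightarrow> ev p = 0"
begin

definition loc :: "'k set" where
  "loc = {emb p / emb q | p q. \<exists>u. ev q * u = 1}"

definition loc_hom :: "'k \<Rightarrow> 'l" where
  "loc_hom x = (THE v. \<exists>p q u. x = emb p / emb q \<and> ev q * u = 1 \<and> v = ev p * u)"

lemma fraction_mem: "ev q * u = 1 \<Longrightarrow> emb p / emb q \<in> loc"
  unfolding loc_def by blast

lemma emb_denominator_nonzero: "ev q * u = 1 \<Longrightarrow> emb q \<noteq> 0"
  using ev_kernel by force

lemma ev_fraction_eq:
  assumes eq: "emb p / emb q = emb p' / emb q'" and u: "ev q * u = 1" and u': "ev q' * u' = 1"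
  shows "ev p * u = ev p' * u'"
proof -
  have "emb (p * q' - p' * q) = 0"
    using eq emb_denominator_nonzero[OF u] emb_denominator_nonzero[OF u']
    by (simp add: frac_eq_eq hom_distribs)
  then have "ev (p * q' - p' * q) = 0" by (rule ev_kernel)
  then have "ev p * ev q' = ev p' * ev q" by (simp add: hom_distribs)
  then have "ev p * u * (ev q' * u') = ev p' * u' * (ev q * u)"
    by (simp add: ac_simps)
  then show ?thesis using u u' by simp
qed

lemma loc_hom_fraction: "ev q * u = 1 \<Longrightarrow> loc_hom (emb p / emb q) = ev p * u"
  unfolding loc_hom_def by (rule the_equality) (auto dest: ev_fraction_eq)

lemma emb_mem: "emb p \<in> loc"
  and loc_hom_emb: "loc_hom (emb p) = ev p"
  using fraction_mem[of 1 1 p] loc_hom_fraction[of 1 1 p] by simp_all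

sublocale subring_hom loc loc_hom
proof
  show "1 \<in> loc" "loc_hom 1 = 1" using emb_mem[of 1] loc_hom_emb[of 1] by simp_all
next
  fix x y assume "x \<in> loc" "y \<in> loc"
  then obtain p q u p' q' u' where x: "x = emb p / emb q" "ev q * u = 1"
    and y: "y = emb p' / emb q'" "ev q' * u' = 1"
    unfolding loc_def by blast
  have uu': "ev (q * q') * (u * u') = 1" using x(2) y(2) by (simp add: ev.hom_mult ac_simps)
  have sum: "x + y = emb (p * q' + p' * q) / emb (q * q')"
    and prod: "x * y = emb (p * p') / emb (q * q')"
    using x y emb_denominator_nonzero[OF x(2)] emb_denominator_nonzero[OF y(2)]
    by (simp_all add: add_frac_eq hom_distribs)
  show "x + y \<in> loc" "x * y \<in> loc"
    unfolding sum prod by (rule fraction_mem[OF uu'])+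
  have "loc_hom (x + y) = ev p * u * (ev q' * u') + ev p' * u' * (ev q * u)"
    unfolding sum loc_hom_fraction[OF uu'] by (simp add: hom_distribs algebra_simps)
  then show "loc_hom (x + y) = loc_hom x + loc_hom y"
    using x y loc_hom_fraction[OF x(2)] loc_hom_fraction[OF y(2)] by simp
  have "loc_hom (x * y) = (ev p * u) * (ev p' * u')"
    unfolding prod loc_hom_fraction[OF uu'] by (simp add: hom_distribs ac_simps)
  then show "loc_hom (x * y) = loc_hom x * loc_hom y"
    using x y loc_hom_fraction[OF x(2)] loc_hom_fraction[OF y(2)] by simp
next
  fix x assume "x \<in> loc"
  then obtain p q u where "x = emb p / emb q" "ev q * u = 1" unfolding loc_def by blast
  then show "- x \<in> loc" using fraction_mem[of q u "- p"] by (simp add: emb.hom_uminus)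
qed

lemma
  assumes x: "x \<in> loc" and w: "loc_hom x * w = 1"
  shows inverse_mem: "inverse x \<in> loc"
    and loc_hom_inverse: "loc_hom (inverse x) * loc_hom x = 1"
proof -
  obtain p q u where x': "x = emb p / emb q" "ev q * u = 1" using x unfolding loc_def by blast
  have hom_x: "loc_hom x = ev p * u" using loc_hom_fraction[OF x'(2)] x'(1) by simp
  have uw: "ev p * (u * w) = 1" using w hom_x by (simp add: ac_simps)
  have inv: "inverse x = emb q / emb p" using x'(1) by simp
  show "inverse x \<in> loc" unfolding inv by (rule fraction_mem[OF uw])
  have "loc_hom (inverse x) * loc_hom x = (ev q * u) * (ev p * (u * w))"
    unfolding inv loc_hom_fraction[OF uw] hom_x by (simp add: ac_simps)
  then show "loc_hom (inverse x) * loc_hom x = 1" using x'(2) uw by simp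
qed

lemma gen_grp_emb_mem:
  assumes G': "unit_subgroup G'" and P: "ev ` P \<subseteq> G'" and x: "x \<in> gen_grp (emb ` P)"
  shows "x \<in> loc \<and> loc_hom x \<in> G'"
  using x
proof (induction rule: gen_grp.induct)
  case one
  then show ?case using G' one_mem hom_one unfolding unit_subgroup_def by simp
next
  case (gen s)
  then show ?case using P emb_mem loc_hom_emb by auto
next
  case (mult a b)
  then show ?case using G' mult_mem hom_mult unfolding unit_subgroup_def by simp
next
  case (inv a)
  then obtain w where w: "w \<in> G'" "loc_hom a * w = 1" using G' unfolding unit_subgroup_def by blast
  have "loc_hom (inverse a) = (loc_hom (inverse a) * loc_hom a) * w"
    using w(2) by (simp add: mult.assoc)
  also have "\<dots> = w" using loc_hom_inverse[of a w] inv.IH w(2) by simp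
  finally show ?case using inverse_mem[of a w] inv.IH w by simp
qed

theorem pf_representable_gen_grp_transfer:
  assumes "unit_subgroup G'" and "ev ` P \<subseteq> G'" and "pf_representable (gen_grp (emb ` P)) M"
  shows "pf_representable G' M"
proof (rule pf_representable_transfer)
  show "gen_grp (emb ` P) \<subseteq> loc" "loc_hom ` gen_grp (emb ` P) \<subseteq> G'"
    using gen_grp_emb_mem[OF assms(1,2)] by auto
qed (use zero_notin_unit_subgroup[OF assms(1)] assms(3) in simp_all)

end

lemma unit_subgroup_gen_grp_to_fract:
  assumes "comm_ring_hom h" and "0 \<notin> h ` P"
  shows "unit_subgroup (gen_grp (to_fract ` P))"
proof -
  interpret comm_ring_hom h by fact
  show ?thesis using assms(2) by (intro unit_subgroup_gen_grp) force
qed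

lemma localization_to_fract:
  assumes "comm_ring_hom ev"
  shows "localization to_fract ev"
proof -
  interpret ev: comm_ring_hom ev by fact
  show ?thesis
    unfolding localization_def localization_axioms_def
    using to_fract_hom.comm_ring_hom_axioms assms by simp
qed

lemma pf_representable_to_fract_transfer:
  assumes "comm_ring_hom ev" and "unit_subgroup G'" and "ev ` P \<subseteq> G'"
    and "pf_representable (gen_grp (to_fract ` P)) M"
  shows "pf_representable G' M"
  by (rule localization.pf_representable_gen_grp_transfer[OF localization_to_fract[OF assms(1)]
        assms(2-4)])

section \<open>The Hydra partial fields\<close>

lemma five_cases: "(x::5) = 0 \<or> x = 1 \<or> x = 2 \<or> x = 3 \<or> x = 4"
proof (cases x)
  case (of_int z)
  then have "z = 0 \<or> z = 1 \<or> z = 2 \<or> z = 3 \<or> z = 4" by auto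
  then show ?thesis using of_int by auto
qed

lemma unit_subgroup_H1: "unit_subgroup H1"
proof -
  have inverse: "\<exists>b. b \<noteq> 0 \<and> a * b = 1" if a: "a \<noteq> 0" for a :: 5
  proof -
    consider "a = 1" | "a = 2" | "a = 3" | "a = 4" using five_cases[of a] a by blast
    then show ?thesis
    proof cases
      case 1 show ?thesis by (rule exI[of _ 1]) (simp add: 1)
    next
      case 2 show ?thesis by (rule exI[of _ 3]) (simp add: 2)
    next
      case 3 show ?thesis by (rule exI[of _ 2]) (simp add: 3)
    next
      case 4 show ?thesis by (rule exI[of _ 4]) (simp add: 4)
    qed
  qed
  have "a * b \<noteq> 0" if a: "a \<noteq> 0" and b: "b \<noteq> 0" for a b :: 5
  proof
    assume ab: "a * b = 0"
    obtain a' where "a' * a = 1" using inverse[OF a] by (auto simp: mult.commute)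
    then have "b = a' * (a * b)" by (simp add: mult.assoc[symmetric])
    with ab b show False by simp
  qed
  then show ?thesis unfolding unit_subgroup_def H1_def using inverse by auto
qed

text \<open>Both \<open>\<i>\<close> and \<open>2 \<in> GF(5)\<close> are square roots of \<open>-1\<close>, so an integer polynomial takes
  the "same" value \<open>a + b x\<close> at both.\<close>
lemma eval_poly_i_and_2:
  "\<exists>a b :: int. eval_poly of_int p \<i> = of_int a + of_int b * \<i> \<and>
     eval_poly of_int p (2::5) = of_int a + of_int b * 2"
proof (induction p)
  case 0
  show ?case by (intro exI[of _ 0]) (simp add: eval_poly_def)
next
  case (pCons c p)
  then obtain a b :: int where ab: "eval_poly of_int p \<i> = of_int a + of_int b * \<i>"
    "eval_poly of_int p (2::5) = of_int a + of_int b * 2" by blast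
  have five: "(5::5) = 0" by simp
  have "eval_poly of_int (pCons c p) \<i> = of_int (c - b) + of_int a * \<i>"
    "eval_poly of_int (pCons c p) (2::5) = of_int (c - b) + of_int a * 2"
    using ab by (simp_all add: algebra_simps five)
  then show ?case by blast
qed

lemma localization_i_2: "localization (\<lambda>p. eval_poly of_int p \<i>) (\<lambda>p. eval_poly of_int p (2::5))"
proof -
  have "eval_poly of_int p (2::5) = 0" if "eval_poly of_int p \<i> = 0" for p
    using eval_poly_i_and_2[of p] that by (auto simp: complex_eq_iff)
  moreover have "comm_ring_hom (\<lambda>p. eval_poly of_int p \<i>)"
    and "comm_ring_hom (\<lambda>p. eval_poly of_int p (2::5))"
    by (intro comm_ring_hom_eval_poly of_int_hom.comm_ring_hom_axioms)+
  ultimately show ?thesis unfolding localization_def localization_axioms_def by blast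
qed

lemma pf_representable_H2_H1:
  assumes "pf_representable H2 M"
  shows "pf_representable H1 M"
proof (rule localization.pf_representable_gen_grp_transfer[OF localization_i_2])
  show "pf_representable (gen_grp ((\<lambda>p. eval_poly of_int p \<i>) ` {[:0, 1:], [:1, -1:]})) M"
    using assms unfolding H2_def by simp
  show "(\<lambda>p. eval_poly of_int p (2::5)) ` {[:0, 1:], [:1, -1:]} \<subseteq> H1"
    unfolding H1_def by simp
qed (rule unit_subgroup_H1)

lemma a3_eq: "a3 = to_fract [:0, 1:]"
  by (simp add: a3_def to_fract_def)

lemma H3_eq: "H3 = gen_grp (to_fract ` {-1, [:0, 1:], 1 - [:0, 1:], [:0, 1:]^2 - [:0, 1:] + 1})"
  unfolding H3_def a3_eq by (simp add: hom_distribs)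

lemma unit_subgroup_H2: "unit_subgroup H2"
  unfolding H2_def by (rule unit_subgroup_gen_grp) (auto simp: complex_eq_iff)

lemma unit_subgroup_H3: "unit_subgroup H3"
  unfolding H3_eq
  by (rule unit_subgroup_gen_grp_to_fract[OF poly_hom.comm_ring_hom_axioms[of 2]]) simp

lemma pf_representable_H3_H2:
  assumes "pf_representable H3 M"
  shows "pf_representable H2 M"
proof -
  let ?ev = "\<lambda>p. eval_poly of_rat p \<i>"
  interpret ev: comm_ring_hom ?ev
    by (rule comm_ring_hom_eval_poly) (rule of_rat_hom.comm_ring_hom_axioms)
  have "?ev [:0, 1:] = \<i>" by simp
  then have "?ev ` {-1, [:0, 1:], 1 - [:0, 1:], [:0, 1:]^2 - [:0, 1:] + 1} =
      {\<i> * \<i>, \<i>, 1 - \<i>, \<i> * \<i> * \<i>}"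
    by (simp add: ev.hom_minus ev.hom_power ev.hom_uminus)
  also have "\<dots> \<subseteq> H2"
    unfolding H2_def by (intro insert_subsetI empty_subsetI gen_grp.mult gen_grp.gen; simp)
  finally show ?thesis
    using assms unfolding H3_eq
    by (rule pf_representable_to_fract_transfer[OF ev.comm_ring_hom_axioms unit_subgroup_H2])
qed

lemma a4_eq: "a4 = to_fract [:[:0, 1:]:]" and b4_eq: "b4 = to_fract [:0, 1:]"
  by (simp_all add: a4_def b4_def to_fract_def)

lemma H4_eq:
  "H4 = gen_grp (to_fract ` {-1, [:[:0, 1:]:], [:0, 1:], [:[:0, 1:]:] - 1, [:0, 1:] - 1,
     [:[:0, 1:]:] * [:0, 1:] - 1, [:[:0, 1:]:] + [:0, 1:] - 2 * [:[:0, 1:]:] * [:0, 1:]})"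
  unfolding H4_def a4_eq b4_eq image_insert image_empty hom_distribs to_fract_hom.hom_one ..

lemma unit_subgroup_H4: "unit_subgroup H4"
proof -
  let ?h = "\<lambda>p. eval_poly (\<lambda>q. poly q 2) p (3::rat)"
  interpret h: comm_ring_hom ?h by (intro comm_ring_hom_eval_poly poly_hom.comm_ring_hom_axioms)
  have "?h [:[:0, 1:]:] = 2" "?h [:0, 1:] = 3" by simp_all
  then have "0 \<notin> ?h ` {-1, [:[:0, 1:]:], [:0, 1:], [:[:0, 1:]:] - 1, [:0, 1:] - 1,
     [:[:0, 1:]:] * [:0, 1:] - 1, [:[:0, 1:]:] + [:0, 1:] - 2 * [:[:0, 1:]:] * [:0, 1:]}"
    unfolding image_insert image_empty hom_distribs h.hom_one by simp
  then show ?thesis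
    unfolding H4_eq by (rule unit_subgroup_gen_grp_to_fract[OF h.comm_ring_hom_axioms])
qed

lemma a3_minus_1_nonzero: "a3 - 1 \<noteq> 0"
proof -
  have "[:0, 1:] \<noteq> (1 :: rat poly)" by (simp add: one_pCons)
  then show ?thesis unfolding a3_eq by (metis to_fract_1 to_fract_eq_iff right_minus_eq)
qed

lemma pf_representable_H4_H3:
  assumes "pf_representable H4 M"
  shows "pf_representable H3 M"
proof -
  let ?ev = "\<lambda>p. eval_poly (\<lambda>q. eval_poly of_rat q a3) p (a3 / (a3 - 1))"
  interpret coeff: comm_ring_hom "\<lambda>q. eval_poly of_rat q a3"
    by (intro comm_ring_hom_eval_poly of_rat_hom.comm_ring_hom_axioms)
  interpret ev: comm_ring_hom ?ev
    by (intro comm_ring_hom_eval_poly coeff.comm_ring_hom_axioms)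
  have "?ev [:[:0, 1:]:] = a3" "?ev [:0, 1:] = a3 / (a3 - 1)" by simp_all
  then have "?ev ` {-1, [:[:0, 1:]:], [:0, 1:], [:[:0, 1:]:] - 1, [:0, 1:] - 1,
     [:[:0, 1:]:] * [:0, 1:] - 1, [:[:0, 1:]:] + [:0, 1:] - 2 * [:[:0, 1:]:] * [:0, 1:]} =
    {-1, a3, a3 / (a3 - 1), a3 - 1, a3 / (a3 - 1) - 1, a3 * (a3 / (a3 - 1)) - 1,
     a3 + a3 / (a3 - 1) - 2 * a3 * (a3 / (a3 - 1))}"
    unfolding image_insert image_empty hom_distribs ev.hom_one by simp
  also have "\<dots> = {-1, a3, a3 / (a3 - 1), a3 - 1, 1 / (a3 - 1), (a3^2 - a3 + 1) / (a3 - 1),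
     -1 * a3 * (a3 / (a3 - 1))}"
  proof -
    have "a3 / (a3 - 1) - 1 = 1 / (a3 - 1)"
      "a3 * (a3 / (a3 - 1)) - 1 = (a3^2 - a3 + 1) / (a3 - 1)"
      "a3 + a3 / (a3 - 1) - 2 * a3 * (a3 / (a3 - 1)) = -1 * a3 * (a3 / (a3 - 1))"
      using a3_minus_1_nonzero
      by (simp_all add: divide_simps) (simp_all add: algebra_simps power2_eq_square)
    then show ?thesis by (simp only:)
  qed
  also have "\<dots> \<subseteq> H3"
  proof -
    have gens: "-1 \<in> H3" "a3 \<in> H3" "1 - a3 \<in> H3" "a3^2 - a3 + 1 \<in> H3" "1 \<in> H3"
      unfolding H3_def by (auto intro: gen_grp.gen gen_grp.one)
    have "(-1) * (1 - a3) \<in> H3" using gens unfolding H3_def by (intro gen_grp.mult; simp)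
    then have "a3 - 1 \<in> H3" by simp
    with gens show ?thesis unfolding H3_def by (blast intro: gen_grp_divide gen_grp.mult)
  qed
  finally show ?thesis
    using assms unfolding H4_eq
    by (rule pf_representable_to_fract_transfer[OF ev.comm_ring_hom_axioms unit_subgroup_H3])
qed

lemma a5_eq: "a5 = to_fract [:[:[:0, 1:]:]:]" and b5_eq: "b5 = to_fract [:[:0, 1:]:]"
  and c5_eq: "c5 = to_fract [:0, 1:]"
  by (simp_all add: a5_def b5_def c5_def to_fract_def)

lemma H5_eq:
  "H5 = gen_grp (to_fract ` {-1, [:[:[:0, 1:]:]:], [:[:0, 1:]:], [:0, 1:], [:[:[:0, 1:]:]:] - 1,
     [:[:0, 1:]:] - 1, [:0, 1:] - 1, [:[:[:0, 1:]:]:] - [:0, 1:],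
     [:0, 1:] - [:[:[:0, 1:]:]:] * [:[:0, 1:]:],
     (1 - [:0, 1:]) - (1 - [:[:[:0, 1:]:]:]) * [:[:0, 1:]:]})"
  unfolding H5_def a5_eq b5_eq c5_eq image_insert image_empty hom_distribs to_fract_hom.hom_one ..

lemma pf_representable_H5_H4:
  assumes "pf_representable H5 M"
  shows "pf_representable H4 M"
proof -
  let ?ev = "\<lambda>p. eval_poly (\<lambda>q. eval_poly (\<lambda>r. eval_poly of_rat r (inverse a4)) q b4) p b4"
  interpret coeff1: comm_ring_hom "\<lambda>r. eval_poly of_rat r (inverse a4)"
    by (intro comm_ring_hom_eval_poly of_rat_hom.comm_ring_hom_axioms)
  interpret coeff2: comm_ring_hom "\<lambda>q. eval_poly (\<lambda>r. eval_poly of_rat r (inverse a4)) q b4"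
    by (intro comm_ring_hom_eval_poly coeff1.comm_ring_hom_axioms)
  interpret ev: comm_ring_hom ?ev
    by (intro comm_ring_hom_eval_poly coeff2.comm_ring_hom_axioms)
  have "?ev [:[:[:0, 1:]:]:] = inverse a4" "?ev [:[:0, 1:]:] = b4" "?ev [:0, 1:] = b4"
    by simp_all
  then have "?ev ` {-1, [:[:[:0, 1:]:]:], [:[:0, 1:]:], [:0, 1:], [:[:[:0, 1:]:]:] - 1,
     [:[:0, 1:]:] - 1, [:0, 1:] - 1, [:[:[:0, 1:]:]:] - [:0, 1:],
     [:0, 1:] - [:[:[:0, 1:]:]:] * [:[:0, 1:]:],
     (1 - [:0, 1:]) - (1 - [:[:[:0, 1:]:]:]) * [:[:0, 1:]:]} =
    {-1, inverse a4, b4, b4, inverse a4 - 1, b4 - 1, b4 - 1, inverse a4 - b4,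
     b4 - inverse a4 * b4, (1 - b4) - (1 - inverse a4) * b4}"
    unfolding image_insert image_empty hom_distribs ev.hom_one by simp
  also have "\<dots> = {-1, inverse a4, b4, b4, -1 * (a4 - 1) / a4, b4 - 1, b4 - 1,
     -1 * (a4 * b4 - 1) / a4, b4 * (a4 - 1) / a4, (a4 + b4 - 2 * a4 * b4) / a4}"
  proof -
    have "a4 \<noteq> 0" unfolding a4_eq by simp
    then have "inverse a4 - 1 = -1 * (a4 - 1) / a4"
      "inverse a4 - b4 = -1 * (a4 * b4 - 1) / a4"
      "b4 - inverse a4 * b4 = b4 * (a4 - 1) / a4"
      "(1 - b4) - (1 - inverse a4) * b4 = (a4 + b4 - 2 * a4 * b4) / a4"
      by (simp_all add: divide_simps) (simp_all add: algebra_simps)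
    then show ?thesis by (simp only:)
  qed
  also have "\<dots> \<subseteq> H4"
  proof -
    have "-1 \<in> H4" "a4 \<in> H4" "b4 \<in> H4" "a4 - 1 \<in> H4" "b4 - 1 \<in> H4" "a4 * b4 - 1 \<in> H4"
      "a4 + b4 - 2 * a4 * b4 \<in> H4"
      unfolding H4_def by (auto intro: gen_grp.gen)
    then show ?thesis unfolding H4_def by (blast intro: gen_grp_divide gen_grp.mult gen_grp.inv)
  qed
  finally show ?thesis
    using assms unfolding H5_eq
    by (rule pf_representable_to_fract_transfer[OF ev.comm_ring_hom_axioms unit_subgroup_H4])
qed

lemma hydra_rep_Suc:
  assumes "i \<in> {1..4}" and "hydra_rep (Suc i) M"
  shows "hydra_rep i M"
proof -
  have "i = 1 \<or> i = 2 \<or> i = 3 \<or> i = 4" using assms(1) by auto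
  then show ?thesis
    using assms(2) unfolding hydra_rep_def
    by (elim disjE) (simp_all add: pf_representable_H2_H1 pf_representable_H3_H2
        pf_representable_H4_H3 pf_representable_H5_H4)
qed

theorem lemma5p1:
  fixes M :: "'a matroid" and i :: nat
  assumes "i \<in> {1..4}"
    and "excluded_minor_hydra i M"
  shows "(\<exists>N (N' :: 'a matroid). minor_of N M \<and> in_N i N' \<and> matroid_iso N N')
         \<or> excluded_minor_hydra (Suc i) M"
proof -
  have M: "is_matroid M" and not_rep: "\<not> hydra_rep i M"
    and minors_rep: "\<And>N. proper_minor_of N M \<Longrightarrow> hydra_rep i N"
    using assms(2) unfolding excluded_minor_hydra_def by auto
  have not_rep_Suc: "\<not> hydra_rep (Suc i) M" using hydra_rep_Suc[OF assms(1)] not_rep by blast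
  show ?thesis
  proof (cases "\<forall>N. proper_minor_of N M \<longrightarrow> hydra_rep (Suc i) N")
    case True
    then show ?thesis using M not_rep_Suc unfolding excluded_minor_hydra_def by blast
  next
    case False
    then obtain N where "proper_minor_of N M" "\<not> hydra_rep (Suc i) N" by blast
    from ex_minor_minimal_proper_minor[of M N "hydra_rep (Suc i)", OF M this]
    obtain N' where N': "proper_minor_of N' M" "\<not> hydra_rep (Suc i) N'"
      "\<forall>N''. proper_minor_of N'' N' \<longrightarrow> hydra_rep (Suc i) N''"
      by blast
    have "in_N i N'"
      unfolding in_N_def excluded_minor_hydra_def
      using N' minors_rep minor_of_is_matroid[OF M] unfolding proper_minor_of_def by blast
    then show ?thesis using N'(1) matroid_iso_refl unfolding proper_minor_of_def by blast
  qed
qed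

end
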